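(* A topological space $X$ is ultrametrizable in the ordinary sense (i.e. $\mathrm{Ult}(X;\mathbb{R}_{\ge0})\ne\emptyset$) if and only if $\omega_0\in\mathrm{MG}(X)$.
   Context: A linearly ordered Abelian group is an Abelian group with a linear order compatible with addition. For $x,y\in G_{>0}$, $x\asymp y$ iff $y\le nx$ and $x\le my$ for some $n,m\in\mathbb{Z}_{\ge1}$; $\mathrm{Arc}(G)=G_{>0}/\asymp$, ordered by $[x]\preceq[y]$ iff ($nx<y$ for all $n$) or $x\asymp y$; $\mathrm{Arc}(G)^\perp$ is $\mathrm{Arc}(G)$ with a new least element adjoined. For a bottomed linearly ordered set $S$ (least element $\perp_S$, $S^*=S\setminus\{\perp_S\}$), $\chi(S)$ is the least cardinal $\kappa>0$ such that some strictly decreasing family $(s_\alpha)_{\alpha<\kappa}$ in $S^*$ has every $t\in S^*$ bounded below by some $s_\alpha$. A $G$-metric on $X$: $d\colon X^2\to G$ with $d(x,y)=0\iff x=y$, $d\ge0$, symmetric, triangle inequality; $\mathrm{Met}(X;G)$ is the set of $G$-metrics generating the topology of $X$ (via open balls). An $S$-ultrametric: $d\colon X^2\to S$ with $d(x,y)=\perp_S\iff x=y$, symmetric, $d(x,y)\le\max\{d(x,z),d(z,y)\}$; $\mathrm{Ult}(X;S)$ those generating the topology. $\kappa\in\mathrm{MG}(X)$ iff some linearly ordered Abelian group $G$ with $\chi(\mathrm{Arc}(G)^\perp)=\kappa$ has $\mathrm{Met}(X;G)\ne\emptyset$. *)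

theory Defs
  imports "HOL-Analysis.Analysis" "HOL-Algebra.Group"
begin

text \<open>A linearly ordered Abelian group is given by a HOL-Algebra group structure
  G (written multiplicatively: the group operation is \<open>\<otimes>\<close>, the neutral
  element is \<open>\<one>\<close>, and the n-fold sum n x is \<open>x [^] n\<close>) together with
  a relation leq on its carrier that is a linear order compatible with the operation.\<close>

definition lin_ord_ab_group :: "'g monoid \<Rightarrow> ('g \<Rightarrow> 'g \<Rightarrow> bool) \<Rightarrow> bool" where
  "lin_ord_ab_group G leq \<longleftrightarrow>
     comm_group G \<and>
     (\<forall>x\<in>carrier G. leq x x) \<and>
     (\<forall>x\<in>carrier G. \<forall>y\<in>carrier G. leq x y \<and> leq y x \<longrightarrow> x = y) \<and>
     (\<forall>x\<in>carrier G. \<forall>y\<in>carrier G. \<forall>z\<in>carrier G. leq x y \<and> leq y z \<longrightarrow> leq x z) \<and>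
     (\<forall>x\<in>carrier G. \<forall>y\<in>carrier G. leq x y \<or> leq y x) \<and>
     (\<forall>x\<in>carrier G. \<forall>y\<in>carrier G. \<forall>z\<in>carrier G.
        leq x y \<longrightarrow> leq (x \<otimes>\<^bsub>G\<^esub> z) (y \<otimes>\<^bsub>G\<^esub> z))"

definition grp_lt :: "'g monoid \<Rightarrow> ('g \<Rightarrow> 'g \<Rightarrow> bool) \<Rightarrow> 'g \<Rightarrow> 'g \<Rightarrow> bool" where
  "grp_lt G leq x y \<longleftrightarrow> leq x y \<and> x \<noteq> y"

definition grp_pos :: "'g monoid \<Rightarrow> ('g \<Rightarrow> 'g \<Rightarrow> bool) \<Rightarrow> 'g set" where
  "grp_pos G leq = {x \<in> carrier G. grp_lt G leq \<one>\<^bsub>G\<^esub> x}"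

definition arch_equiv :: "'g monoid \<Rightarrow> ('g \<Rightarrow> 'g \<Rightarrow> bool) \<Rightarrow> 'g \<Rightarrow> 'g \<Rightarrow> bool" where
  "arch_equiv G leq x y \<longleftrightarrow>
     (\<exists>n::nat. n \<ge> 1 \<and> leq y (x [^]\<^bsub>G\<^esub> n)) \<and> (\<exists>m::nat. m \<ge> 1 \<and> leq x (y [^]\<^bsub>G\<^esub> m))"

definition arch_rel :: "'g monoid \<Rightarrow> ('g \<Rightarrow> 'g \<Rightarrow> bool) \<Rightarrow> 'g rel" where
  "arch_rel G leq = {(x, y). x \<in> grp_pos G leq \<and> y \<in> grp_pos G leq \<and> arch_equiv G leq x y}"

definition Arc :: "'g monoid \<Rightarrow> ('g \<Rightarrow> 'g \<Rightarrow> bool) \<Rightarrow> 'g set set" where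
  "Arc G leq = grp_pos G leq // arch_rel G leq"

text \<open>Order on \<open>Arc(G)\<close>: \<open>[x] \<preceq> [y]\<close> iff (\<open>n x < y\<close> for all n) or \<open>x \<asymp> y\<close>
  (well defined on classes; we quantify over representatives).\<close>
definition Arc_le :: "'g monoid \<Rightarrow> ('g \<Rightarrow> 'g \<Rightarrow> bool) \<Rightarrow> 'g set \<Rightarrow> 'g set \<Rightarrow> bool" where
  "Arc_le G leq a b \<longleftrightarrow>
     (\<exists>x\<in>a. \<exists>y\<in>b.
        (\<forall>n::nat. n \<ge> 1 \<longrightarrow> grp_lt G leq (x [^]\<^bsub>G\<^esub> n) y) \<or> arch_equiv G leq x y)"

text \<open>\<open>Arc(G)^\<perp>\<close>: \<open>Arc(G)\<close> with a new least element adjoined, represented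
  with the option type (\<open>None\<close> is the new least element).\<close>
definition Arc_bot :: "'g monoid \<Rightarrow> ('g \<Rightarrow> 'g \<Rightarrow> bool) \<Rightarrow> 'g set option set" where
  "Arc_bot G leq = insert None (Some ` Arc G leq)"

definition Arc_bot_le :: "'g monoid \<Rightarrow> ('g \<Rightarrow> 'g \<Rightarrow> bool) \<Rightarrow> 'g set option \<Rightarrow> 'g set option \<Rightarrow> bool" where
  "Arc_bot_le G leq u v \<longleftrightarrow>
     (case u of None \<Rightarrow> True
      | Some a \<Rightarrow> (case v of None \<Rightarrow> False | Some b \<Rightarrow> Arc_le G leq a b))"

text \<open>A bottomed linearly ordered set is given by a carrier S, an order leq and its
  least element bt; \<open>S^* = S - {bt}\<close>.  A strictly decreasing family
  indexed by an ordinal \<open>\<le> \<omega>\<close> is a function \<open>s :: nat \<Rightarrow> _\<close> on the index set I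
  (I = {..<n} for the finite ordinal n, I = UNIV for \<omega>) which is coinitial in \<open>S^*\<close>.\<close>

definition coinitial_dec_family ::
  "'s set \<Rightarrow> ('s \<Rightarrow> 's \<Rightarrow> bool) \<Rightarrow> 's \<Rightarrow> nat set \<Rightarrow> (nat \<Rightarrow> 's) \<Rightarrow> bool" where
  "coinitial_dec_family S leq bt I s \<longleftrightarrow>
     (\<forall>\<alpha>\<in>I. s \<alpha> \<in> S - {bt}) \<and>
     (\<forall>\<alpha>\<in>I. \<forall>\<beta>\<in>I. \<alpha> < \<beta> \<longrightarrow> leq (s \<beta>) (s \<alpha>) \<and> s \<beta> \<noteq> s \<alpha>) \<and>
     (\<forall>t\<in>S - {bt}. \<exists>\<alpha>\<in>I. leq (s \<alpha>) t)"

text \<open>\<open>\<chi>(S) = \<omega>_0\<close>: \<open>\<omega>_0\<close> is the least cardinal \<open>\<kappa> > 0\<close> admitting such a family,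
  i.e. there is one indexed by \<open>\<omega>_0\<close> and none indexed by a cardinal \<open>0 < \<kappa> < \<omega>_0\<close>
  (these are exactly the finite cardinals n \<ge> 1).\<close>
definition chi_is_omega0 :: "'s set \<Rightarrow> ('s \<Rightarrow> 's \<Rightarrow> bool) \<Rightarrow> 's \<Rightarrow> bool" where
  "chi_is_omega0 S leq bt \<longleftrightarrow>
     (\<exists>s. coinitial_dec_family S leq bt UNIV s) \<and>
     (\<forall>n::nat. n \<ge> 1 \<longrightarrow> \<not> (\<exists>s. coinitial_dec_family S leq bt {..<n} s))"

definition is_G_metric ::
  "'a set \<Rightarrow> 'g monoid \<Rightarrow> ('g \<Rightarrow> 'g \<Rightarrow> bool) \<Rightarrow> ('a \<Rightarrow> 'a \<Rightarrow> 'g) \<Rightarrow> bool" where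
  "is_G_metric A G leq d \<longleftrightarrow>
     (\<forall>x\<in>A. \<forall>y\<in>A. d x y \<in> carrier G) \<and>
     (\<forall>x\<in>A. \<forall>y\<in>A. d x y = \<one>\<^bsub>G\<^esub> \<longleftrightarrow> x = y) \<and>
     (\<forall>x\<in>A. \<forall>y\<in>A. leq \<one>\<^bsub>G\<^esub> (d x y)) \<and>
     (\<forall>x\<in>A. \<forall>y\<in>A. d x y = d y x) \<and>
     (\<forall>x\<in>A. \<forall>y\<in>A. \<forall>z\<in>A. leq (d x y) (d x z \<otimes>\<^bsub>G\<^esub> d z y))"

definition G_metric_topology ::
  "'a set \<Rightarrow> 'g monoid \<Rightarrow> ('g \<Rightarrow> 'g \<Rightarrow> bool) \<Rightarrow> ('a \<Rightarrow> 'a \<Rightarrow> 'g) \<Rightarrow> 'a topology" where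
  "G_metric_topology A G leq d =
     topology_generated_by
       {{y \<in> A. grp_lt G leq (d x y) r} | x r. x \<in> A \<and> r \<in> carrier G \<and> grp_lt G leq \<one>\<^bsub>G\<^esub> r}"

definition Met :: "'a topology \<Rightarrow> 'g monoid \<Rightarrow> ('g \<Rightarrow> 'g \<Rightarrow> bool) \<Rightarrow> ('a \<Rightarrow> 'a \<Rightarrow> 'g) set" where
  "Met X G leq = {d. is_G_metric (topspace X) G leq d \<and>
                    G_metric_topology (topspace X) G leq d = X}"

definition is_S_ultrametric ::
  "'a set \<Rightarrow> 's set \<Rightarrow> ('s \<Rightarrow> 's \<Rightarrow> bool) \<Rightarrow> 's \<Rightarrow> ('a \<Rightarrow> 'a \<Rightarrow> 's) \<Rightarrow> bool" where
  "is_S_ultrametric A S leq bt d \<longleftrightarrow>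
     (\<forall>x\<in>A. \<forall>y\<in>A. d x y \<in> S) \<and>
     (\<forall>x\<in>A. \<forall>y\<in>A. d x y = bt \<longleftrightarrow> x = y) \<and>
     (\<forall>x\<in>A. \<forall>y\<in>A. d x y = d y x) \<and>
     (\<forall>x\<in>A. \<forall>y\<in>A. \<forall>z\<in>A. leq (d x y) (d x z) \<or> leq (d x y) (d z y))"

definition S_ultrametric_topology ::
  "'a set \<Rightarrow> 's set \<Rightarrow> ('s \<Rightarrow> 's \<Rightarrow> bool) \<Rightarrow> 's \<Rightarrow> ('a \<Rightarrow> 'a \<Rightarrow> 's) \<Rightarrow> 'a topology" where
  "S_ultrametric_topology A S leq bt d =
     topology_generated_by
       {{y \<in> A. leq (d x y) r \<and> d x y \<noteq> r} | x r. x \<in> A \<and> r \<in> S - {bt}}"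

definition Ult :: "'a topology \<Rightarrow> 's set \<Rightarrow> ('s \<Rightarrow> 's \<Rightarrow> bool) \<Rightarrow> 's \<Rightarrow> ('a \<Rightarrow> 'a \<Rightarrow> 's) set" where
  "Ult X S leq bt = {d. is_S_ultrametric (topspace X) S leq bt d \<and>
                       S_ultrametric_topology (topspace X) S leq bt d = X}"

end

theory Submission
  imports Defs "HOL-Computational_Algebra.Polynomial"
begin

(* Both sides reduce to a sequence g 0, g 1, ... of positive elements of G whose Archimedean
   classes strictly decrease and are coinitial in Arc(G): such a scale exists iff
   chi(Arc(G)^bot) = omega_0. Along a scale, the real distance level (1/2)^n corresponds to the
   class threshold "infinitely smaller than g n". Since elements infinitely smaller than g n are
   closed under sums, a G-metric D yields the real ultrametric 2^-N, N the first index with D not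
   infinitely smaller than g N; conversely a real ultrametric d yields the G-valued ultrametric
   g K, K the first index with (1/2)^K <= d, which is a G-metric. Small balls of either metric
   contain small balls of the other, so the topologies agree. Finally, Z[t] ordered by the sign
   of the lowest nonzero coefficient has the scale t^n, and it can be carried over to any
   infinite type. *)

section \<open>Ordered abelian groups\<close>

definition arch_less :: "'g monoid \<Rightarrow> ('g \<Rightarrow> 'g \<Rightarrow> bool) \<Rightarrow> 'g \<Rightarrow> 'g \<Rightarrow> bool" where
  "arch_less G leq a b \<longleftrightarrow> (\<forall>n::nat. n \<ge> 1 \<longrightarrow> grp_lt G leq (a [^]\<^bsub>G\<^esub> n) b)"

lemma (in monoid) nat_pow_1 [simp]: "x \<in> carrier G \<Longrightarrow> x [^] (1::nat) = x"
  by (simp add: numeral_nat)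

locale ordered_comm_group = comm_group G for G :: "'g monoid" (structure) +
  fixes leq :: "'g \<Rightarrow> 'g \<Rightarrow> bool" (infix "\<preceq>" 50)
  assumes ord_refl: "x \<in> carrier G \<Longrightarrow> x \<preceq> x"
    and ord_antisym: "x \<in> carrier G \<Longrightarrow> y \<in> carrier G \<Longrightarrow> x \<preceq> y \<Longrightarrow> y \<preceq> x \<Longrightarrow> x = y"
    and ord_trans: "x \<in> carrier G \<Longrightarrow> y \<in> carrier G \<Longrightarrow> z \<in> carrier G \<Longrightarrow> x \<preceq> y \<Longrightarrow> y \<preceq> z \<Longrightarrow> x \<preceq> z"
    and ord_total: "x \<in> carrier G \<Longrightarrow> y \<in> carrier G \<Longrightarrow> x \<preceq> y \<or> y \<preceq> x"
    and mult_right_mono: "x \<in> carrier G \<Longrightarrow> y \<in> carrier G \<Longrightarrow> z \<in> carrier G \<Longrightarrow> x \<preceq> y \<Longrightarrow>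
      x \<otimes> z \<preceq> y \<otimes> z"

lemma lin_ord_ab_group_iff: "lin_ord_ab_group G leq \<longleftrightarrow> ordered_comm_group G leq"
  unfolding lin_ord_ab_group_def ordered_comm_group_def ordered_comm_group_axioms_def by blast

context ordered_comm_group
begin

abbreviation lt (infix "\<lessdot>" 50) where "x \<lessdot> y \<equiv> grp_lt G leq x y"
abbreviation arch_ll (infix "\<lless>" 50) where "x \<lless> y \<equiv> arch_less G leq x y"
abbreviation arch_eq (infix "\<asymp>" 50) where "x \<asymp> y \<equiv> arch_equiv G leq x y"
abbreviation pos where "pos \<equiv> grp_pos G leq"

lemma lt_iff: "x \<lessdot> y \<longleftrightarrow> x \<preceq> y \<and> x \<noteq> y"
  by (simp add: grp_lt_def)

lemma pos_iff: "a \<in> pos \<longleftrightarrow> a \<in> carrier G \<and> \<one> \<lessdot> a"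
  by (simp add: grp_pos_def)

lemma pos_carrier: "a \<in> pos \<Longrightarrow> a \<in> carrier G"
  by (simp add: pos_iff)

lemma not_le_iff_lt: "x \<in> carrier G \<Longrightarrow> y \<in> carrier G \<Longrightarrow> \<not> x \<preceq> y \<longleftrightarrow> y \<lessdot> x"
  using ord_total[of x y] ord_refl[of x] ord_antisym[of x y] by (auto simp: lt_iff)

lemma lt_le_trans: "x \<in> carrier G \<Longrightarrow> y \<in> carrier G \<Longrightarrow> z \<in> carrier G \<Longrightarrow> x \<lessdot> y \<Longrightarrow> y \<preceq> z \<Longrightarrow> x \<lessdot> z"
  using ord_trans[of x y z] ord_antisym[of x y] by (auto simp: lt_iff)

lemma le_lt_trans: "x \<in> carrier G \<Longrightarrow> y \<in> carrier G \<Longrightarrow> z \<in> carrier G \<Longrightarrow> x \<preceq> y \<Longrightarrow> y \<lessdot> z \<Longrightarrow> x \<lessdot> z"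
  using ord_trans[of x y z] ord_antisym[of y z] by (auto simp: lt_iff)

lemma lt_trans: "x \<in> carrier G \<Longrightarrow> y \<in> carrier G \<Longrightarrow> z \<in> carrier G \<Longrightarrow> x \<lessdot> y \<Longrightarrow> y \<lessdot> z \<Longrightarrow> x \<lessdot> z"
  using lt_le_trans lt_iff by blast

lemma mult_left_mono: "x \<in> carrier G \<Longrightarrow> y \<in> carrier G \<Longrightarrow> z \<in> carrier G \<Longrightarrow> x \<preceq> y \<Longrightarrow> z \<otimes> x \<preceq> z \<otimes> y"
  using mult_right_mono[of x y z] m_comm[of x z] m_comm[of y z] by simp

lemma mult_mono: "x \<in> carrier G \<Longrightarrow> y \<in> carrier G \<Longrightarrow> u \<in> carrier G \<Longrightarrow> v \<in> carrier G \<Longrightarrow>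
    x \<preceq> y \<Longrightarrow> u \<preceq> v \<Longrightarrow> x \<otimes> u \<preceq> y \<otimes> v"
  using ord_trans[of "x \<otimes> u" "y \<otimes> u" "y \<otimes> v"] mult_right_mono[of x y u] mult_left_mono[of u v y]
  by simp

lemma mult_left_strict_mono: "x \<in> carrier G \<Longrightarrow> y \<in> carrier G \<Longrightarrow> z \<in> carrier G \<Longrightarrow> x \<lessdot> y \<Longrightarrow> z \<otimes> x \<lessdot> z \<otimes> y"
  using mult_left_mono[of x y z] by (auto simp: lt_iff)

lemma le_mult_nonneg: "x \<in> carrier G \<Longrightarrow> u \<in> carrier G \<Longrightarrow> \<one> \<preceq> u \<Longrightarrow> x \<preceq> x \<otimes> u"
  using mult_left_mono[of \<one> u x] by simp

lemma lt_imp_pos_gap: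
  assumes "x \<in> carrier G" "y \<in> carrier G" "x \<lessdot> y"
  obtains c where "c \<in> pos" "y = x \<otimes> c"
proof
  show "y = x \<otimes> (inv x \<otimes> y)"
    using assms by (simp add: m_assoc[symmetric])
  have "inv x \<otimes> x \<lessdot> inv x \<otimes> y"
    using assms by (intro mult_left_strict_mono) auto
  then show "inv x \<otimes> y \<in> pos"
    using assms by (simp add: pos_iff)
qed

lemma pow_mono: "x \<in> carrier G \<Longrightarrow> y \<in> carrier G \<Longrightarrow> x \<preceq> y \<Longrightarrow> x [^] (n::nat) \<preceq> y [^] n"
  by (induction n) (auto simp: ord_refl intro: mult_mono)

lemma arch_less_imp_lt: "a \<in> carrier G \<Longrightarrow> a \<lless> b \<Longrightarrow> a \<lessdot> b"
  unfolding arch_less_def by (metis order_refl nat_pow_1)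

lemma arch_less_pow_not_ge:
  "a \<in> carrier G \<Longrightarrow> b \<in> carrier G \<Longrightarrow> a \<lless> b \<Longrightarrow> n \<ge> 1 \<Longrightarrow> b \<preceq> a [^] (n::nat) \<Longrightarrow> False"
  unfolding arch_less_def by (meson nat_pow_closed not_le_iff_lt)

lemma le_not_arch_less: "a \<in> carrier G \<Longrightarrow> b \<in> carrier G \<Longrightarrow> b \<preceq> a \<Longrightarrow> \<not> a \<lless> b"
  using arch_less_imp_lt[of a b] ord_antisym[of a b] by (auto simp: lt_iff)

lemma one_arch_less: "g \<in> carrier G \<Longrightarrow> \<one> \<lessdot> g \<Longrightarrow> \<one> \<lless> g"
  unfolding arch_less_def by simp

lemma arch_less_trans: "a \<in> carrier G \<Longrightarrow> b \<in> carrier G \<Longrightarrow> c \<in> carrier G \<Longrightarrow> a \<lless> b \<Longrightarrow> b \<lless> c \<Longrightarrow> a \<lless> c"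
  unfolding arch_less_def by (metis order_refl lt_trans nat_pow_closed nat_pow_1)

lemma le_arch_less_trans: "a \<in> carrier G \<Longrightarrow> b \<in> carrier G \<Longrightarrow> c \<in> carrier G \<Longrightarrow> a \<preceq> b \<Longrightarrow> b \<lless> c \<Longrightarrow> a \<lless> c"
  unfolding arch_less_def by (meson le_lt_trans nat_pow_closed pow_mono)

lemma arch_less_asym: "a \<in> carrier G \<Longrightarrow> b \<in> carrier G \<Longrightarrow> a \<lless> b \<Longrightarrow> \<not> b \<lless> a"
  using arch_less_imp_lt[of a b] arch_less_imp_lt[of b a] ord_antisym[of a b] by (auto simp: lt_iff)

lemma arch_less_not_arch_equiv: "a \<in> carrier G \<Longrightarrow> b \<in> carrier G \<Longrightarrow> a \<lless> b \<Longrightarrow> \<not> a \<asymp> b"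
  unfolding arch_equiv_def using arch_less_pow_not_ge by blast

lemma arch_less_trichotomy:
  assumes "a \<in> carrier G" "b \<in> carrier G"
  shows "a \<lless> b \<or> a \<asymp> b \<or> b \<lless> a"
  using assms not_le_iff_lt unfolding arch_less_def arch_equiv_def by (meson nat_pow_closed)

lemma arch_equiv_refl: "a \<in> carrier G \<Longrightarrow> a \<asymp> a"
  unfolding arch_equiv_def by (metis order_refl ord_refl nat_pow_1)

lemma arch_equiv_sym: "a \<asymp> b \<Longrightarrow> b \<asymp> a"
  unfolding arch_equiv_def by blast

lemma le_pow_trans:
  assumes "x \<in> carrier G" "y \<in> carrier G" "z \<in> carrier G"
    and "y \<preceq> x [^] (n::nat)" "z \<preceq> y [^] (m::nat)"
  shows "z \<preceq> x [^] (n * m)"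
proof -
  have "y [^] m \<preceq> (x [^] n) [^] m"
    using assms pow_mono by simp
  then show ?thesis
    using assms ord_trans[of z "y [^] m" "x [^] (n * m)"] by (simp add: nat_pow_pow)
qed

lemma arch_equiv_trans:
  assumes "a \<in> carrier G" "b \<in> carrier G" "c \<in> carrier G" "a \<asymp> b" "b \<asymp> c"
  shows "a \<asymp> c"
  using assms le_pow_trans[of a b c] le_pow_trans[of c b a] unfolding arch_equiv_def
  by (metis nat_mult_1 mult_le_mono)

lemma arch_less_arch_equiv_left:
  assumes "a \<in> carrier G" "b \<in> carrier G" "a' \<in> carrier G" "a \<lless> b" "a \<asymp> a'"
  shows "a' \<lless> b"
  unfolding arch_less_def
proof (intro allI impI)
  fix k :: nat assume k: "k \<ge> 1"
  obtain m :: nat where m: "m \<ge> 1" "a' \<preceq> a [^] m"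
    using assms unfolding arch_equiv_def by blast
  have "a' [^] k \<preceq> a [^] (m * k)"
    using m assms pow_mono[of a' "a [^] m" k] by (simp add: nat_pow_pow)
  moreover have "a [^] (m * k) \<lessdot> b"
    using assms k m unfolding arch_less_def by simp
  ultimately show "a' [^] k \<lessdot> b"
    using assms le_lt_trans[of "a' [^] k" "a [^] (m * k)" b] by simp
qed

lemma arch_less_arch_equiv_right:
  assumes "a \<in> carrier G" "b \<in> carrier G" "b' \<in> carrier G" "a \<lless> b" "b \<asymp> b'"
  shows "a \<lless> b'"
  unfolding arch_less_def
proof (intro allI impI notI)
  fix k :: nat assume k: "k \<ge> 1"
  obtain m :: nat where m: "m \<ge> 1" "b \<preceq> b' [^] m"
    using assms unfolding arch_equiv_def by blast
  show "a [^] k \<lessdot> b'"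
  proof (rule ccontr)
    assume "\<not> a [^] k \<lessdot> b'"
    then have "b' \<preceq> a [^] k"
      using assms not_le_iff_lt[of b' "a [^] k"] by auto
    then have "b \<preceq> a [^] (k * m)"
      using assms m le_pow_trans[of a b' b k m] by simp
    then show False
      using arch_less_pow_not_ge[OF assms(1,2,4), of "k * m"] k m by (simp add: mult_le_mono)
  qed
qed

lemma arch_less_not_arch_less_trans:
  "a \<in> carrier G \<Longrightarrow> b \<in> carrier G \<Longrightarrow> c \<in> carrier G \<Longrightarrow> a \<lless> b \<Longrightarrow> \<not> c \<lless> b \<Longrightarrow> a \<lless> c"
  using arch_less_trichotomy[of b c] arch_less_trans[of a b c] arch_less_arch_equiv_right[of a b c]
  by auto

lemma not_arch_less_trans:
  "a \<in> carrier G \<Longrightarrow> b \<in> carrier G \<Longrightarrow> c \<in> carrier G \<Longrightarrow> \<not> b \<lless> a \<Longrightarrow> \<not> c \<lless> b \<Longrightarrow> \<not> c \<lless> a"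
  using arch_less_not_arch_less_trans[of c a b] by auto

lemma arch_less_mult:
  assumes "a \<in> carrier G" "b \<in> carrier G" "c \<in> carrier G" "\<one> \<preceq> a" "\<one> \<preceq> b" "a \<lless> c" "b \<lless> c"
  shows "a \<otimes> b \<lless> c"
proof -
  have *: "x \<otimes> y \<lless> c" if "x \<in> carrier G" "y \<in> carrier G" "x \<preceq> y" "y \<lless> c" for x y
    unfolding arch_less_def
  proof (intro allI impI)
    fix k :: nat assume k: "k \<ge> 1"
    have "(x \<otimes> y) [^] k = x [^] k \<otimes> y [^] k"
      using that by (simp add: nat_pow_distrib)
    also have "\<dots> \<preceq> y [^] k \<otimes> y [^] k"
      using that pow_mono by (simp add: mult_right_mono)
    also have "\<dots> = y [^] (k + k)"
      using that by (simp add: nat_pow_mult)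
    finally show "(x \<otimes> y) [^] k \<lessdot> c"
      using that assms k le_lt_trans[of _ "y [^] (k + k)" c] unfolding arch_less_def by simp
  qed
  show ?thesis
    using *[of a b] *[of b a] ord_total[of a b] m_comm[of a b] assms by auto
qed

abbreviation arch_class where "arch_class a \<equiv> arch_rel G leq `` {a}"

lemma equiv_arch_rel: "equiv pos (arch_rel G leq)"
proof (rule equivI)
  show "arch_rel G leq \<subseteq> pos \<times> pos" "sym (arch_rel G leq)"
    unfolding arch_rel_def sym_def using arch_equiv_sym by auto
  show "refl_on pos (arch_rel G leq)" "trans (arch_rel G leq)"
    unfolding arch_rel_def refl_on_def trans_def
    using arch_equiv_refl arch_equiv_trans pos_carrier by blast+
qed

lemma arch_class_eq_iff: "a \<in> pos \<Longrightarrow> b \<in> pos \<Longrightarrow> arch_class a = arch_class b \<longleftrightarrow> a \<asymp> b"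
  using eq_equiv_class_iff[OF equiv_arch_rel] unfolding arch_rel_def by auto

lemma arch_class_in_Arc: "a \<in> pos \<Longrightarrow> arch_class a \<in> Arc G leq"
  unfolding Arc_def by (rule quotientI)

lemma ArcE:
  assumes "A \<in> Arc G leq"
  obtains a where "a \<in> pos" "A = arch_class a"
  using assms unfolding Arc_def by (auto elim: quotientE)

lemma Arc_le_arch_class_iff:
  assumes a: "a \<in> pos" and b: "b \<in> pos"
  shows "Arc_le G leq (arch_class a) (arch_class b) \<longleftrightarrow> \<not> b \<lless> a"
proof
  assume "Arc_le G leq (arch_class a) (arch_class b)"
  then obtain x y where "x \<in> pos" "a \<asymp> x" "y \<in> pos" "b \<asymp> y" "x \<lless> y \<or> x \<asymp> y"
    unfolding Arc_le_def arch_less_def arch_rel_def by blast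
  then show "\<not> b \<lless> a"
    using a b pos_carrier arch_less_arch_equiv_left[of b a y] arch_less_arch_equiv_right[of y a x]
      arch_less_asym[of y x] arch_less_not_arch_equiv[of y x] arch_equiv_sym
    by blast
next
  assume "\<not> b \<lless> a"
  then have "a \<lless> b \<or> a \<asymp> b"
    using arch_less_trichotomy[of a b] a b pos_carrier by blast
  moreover have "a \<in> arch_class a" "b \<in> arch_class b"
    using a b pos_carrier arch_equiv_refl unfolding arch_rel_def by auto
  ultimately show "Arc_le G leq (arch_class a) (arch_class b)"
    unfolding Arc_le_def arch_less_def by blast
qed

end

lemma Arc_bot_minus_None: "Arc_bot G leq - {None} = Some ` Arc G leq"
  unfolding Arc_bot_def by auto

lemma Arc_bot_le_Some [simp]: "Arc_bot_le G leq (Some A) (Some B) \<longleftrightarrow> Arc_le G leq A B"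
  unfolding Arc_bot_le_def by simp

section \<open>Scales and the character of \<open>Arc(G)\<^sup>\<bottom>\<close>\<close>

locale arch_scale = ordered_comm_group G leq
  for G :: "'g monoid" (structure) and leq (infix "\<preceq>" 50) +
  fixes g :: "nat \<Rightarrow> 'g"
  assumes scale_pos: "g n \<in> grp_pos G leq"
    and scale_Suc_arch_less: "arch_less G leq (g (Suc n)) (g n)"
    and scale_coinitial: "t \<in> grp_pos G leq \<Longrightarrow> \<exists>n. \<not> arch_less G leq t (g n)"
begin

lemma scale_carrier [simp]: "g n \<in> carrier G"
  using scale_pos pos_carrier by blast

lemma one_lt_scale: "\<one> \<lessdot> g n"
  using scale_pos pos_iff by blast

lemma scale_arch_less: "m < n \<Longrightarrow> g n \<lless> g m"
proof (induction n)
  case (Suc n)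
  then show ?case
    using scale_Suc_arch_less arch_less_trans[of "g (Suc n)" "g n" "g m"] less_Suc_eq by auto
qed simp

lemma arch_less_scale_antimono: "t \<in> carrier G \<Longrightarrow> t \<lless> g n \<Longrightarrow> m \<le> n \<Longrightarrow> t \<lless> g m"
  using scale_arch_less[of m n] arch_less_trans[of t "g n" "g m"] by (cases "m = n") auto

lemma scale_lt_iff: "g m \<lessdot> g n \<longleftrightarrow> n < m"
  using scale_arch_less[of n m] scale_arch_less[of m n] arch_less_imp_lt
    lt_iff ord_antisym[of "g m" "g n"] by (cases m n rule: linorder_cases) auto

lemma scale_antimono: "m \<le> n \<Longrightarrow> g n \<preceq> g m"
  using scale_lt_iff[of n m] ord_refl[of "g m"] lt_iff by (cases "m = n") auto

lemma scale_below:
  assumes "t \<in> pos"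
  obtains n where "g n \<lessdot> t"
proof -
  obtain n where "\<not> t \<lless> g n"
    using scale_coinitial assms by blast
  then have "g (Suc n) \<lless> t"
    by (rule arch_less_not_arch_less_trans[OF scale_carrier scale_carrier pos_carrier[OF assms]
          scale_Suc_arch_less])
  then show ?thesis
    by (rule that[OF arch_less_imp_lt[OF scale_carrier]])
qed

lemma coinitial_dec_family_scale:
  "coinitial_dec_family (Arc_bot G leq) (Arc_bot_le G leq) None UNIV (\<lambda>n. Some (arch_class (g n)))"
  unfolding coinitial_dec_family_def Arc_bot_minus_None
proof (intro conjI ballI impI)
  fix m n :: nat assume "m < n"
  then have "g n \<lless> g m"
    by (rule scale_arch_less)
  then show "Arc_bot_le G leq (Some (arch_class (g n))) (Some (arch_class (g m)))"
    and "Some (arch_class (g n)) \<noteq> Some (arch_class (g m))"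
    using Arc_le_arch_class_iff arch_class_eq_iff arch_less_asym arch_less_not_arch_equiv scale_pos
    by auto
next
  fix t assume "t \<in> Some ` Arc G leq"
  then obtain a where a: "a \<in> pos" "t = Some (arch_class a)"
    by (auto elim: ArcE)
  then obtain n where "\<not> a \<lless> g n"
    using scale_coinitial by blast
  then show "\<exists>n\<in>UNIV. Arc_bot_le G leq (Some (arch_class (g n))) t"
    using a Arc_le_arch_class_iff scale_pos by auto
qed (use arch_class_in_Arc scale_pos in auto)

text \<open>A finite coinitial family would have a least class, but the classes of the scale
  descend below every class.\<close>
lemma no_finite_coinitial_dec_family:
  "\<not> coinitial_dec_family (Arc_bot G leq) (Arc_bot_le G leq) None {..<n} s"
proof
  assume fam: "coinitial_dec_family (Arc_bot G leq) (Arc_bot_le G leq) None {..<n} s"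
  have mem: "\<alpha> < n \<Longrightarrow> s \<alpha> \<in> Some ` Arc G leq" for \<alpha>
    using fam unfolding coinitial_dec_family_def Arc_bot_minus_None by auto
  have below: "\<exists>\<alpha><n. Arc_bot_le G leq (s \<alpha>) (Some (arch_class (g k)))" for k
    using fam arch_class_in_Arc[OF scale_pos]
    unfolding coinitial_dec_family_def Arc_bot_minus_None by auto
  have "n \<noteq> 0"
    using below[of 0] by auto
  then obtain b where b: "b \<in> pos" "s (n - 1) = Some (arch_class b)"
    using mem[of "n - 1"] by (auto elim: ArcE)
  have last_least: "Arc_bot_le G leq (s (n - 1)) (s \<alpha>)" if "\<alpha> < n" for \<alpha>
  proof (cases "\<alpha> = n - 1")
    case True
    then show ?thesis
      using b Arc_le_arch_class_iff arch_less_asym[of b b] pos_carrier by auto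
  next
    case False
    then show ?thesis
      using fam that unfolding coinitial_dec_family_def by auto
  qed
  obtain k where k: "\<not> b \<lless> g k"
    using scale_coinitial b by blast
  obtain \<alpha> where \<alpha>: "\<alpha> < n" "Arc_bot_le G leq (s \<alpha>) (Some (arch_class (g (Suc k))))"
    using below by blast
  obtain c where c: "c \<in> pos" "s \<alpha> = Some (arch_class c)"
    using mem[OF \<alpha>(1)] by (auto elim: ArcE)
  have "\<not> g (Suc k) \<lless> c"
    using \<alpha> c Arc_le_arch_class_iff scale_pos by auto
  moreover have "\<not> c \<lless> b"
    using last_least[OF \<alpha>(1)] b c Arc_le_arch_class_iff by auto
  ultimately have "\<not> g (Suc k) \<lless> g k"
    using k b c pos_carrier not_arch_less_trans[of "g k" b c] not_arch_less_trans[of "g k" c "g (Suc k)"]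
    by auto
  then show False
    using scale_Suc_arch_less by blast
qed

lemma chi_is_omega0_Arc_bot: "chi_is_omega0 (Arc_bot G leq) (Arc_bot_le G leq) None"
  unfolding chi_is_omega0_def using coinitial_dec_family_scale no_finite_coinitial_dec_family by blast

end

lemma (in ordered_comm_group) chi_is_omega0_imp_arch_scale:
  assumes "chi_is_omega0 (Arc_bot G leq) (Arc_bot_le G leq) None"
  obtains g where "arch_scale G leq g"
proof -
  obtain s where fam: "coinitial_dec_family (Arc_bot G leq) (Arc_bot_le G leq) None UNIV s"
    using assms unfolding chi_is_omega0_def by blast
  have "\<forall>n. \<exists>a. a \<in> pos \<and> s n = Some (arch_class a)"
    using fam unfolding coinitial_dec_family_def Arc_bot_minus_None by (fastforce elim: ArcE)
  then obtain g where g: "\<And>n. g n \<in> pos" "\<And>n. s n = Some (arch_class (g n))"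
    by metis
  show ?thesis
  proof (rule that, unfold_locales)
    fix n
    have "Arc_bot_le G leq (s (Suc n)) (s n)" "s (Suc n) \<noteq> s n"
      using fam unfolding coinitial_dec_family_def by auto
    then have "\<not> g n \<lless> g (Suc n)" "\<not> g (Suc n) \<asymp> g n"
      using g Arc_le_arch_class_iff arch_class_eq_iff by auto
    then show "g (Suc n) \<lless> g n"
      using arch_less_trichotomy g(1) pos_carrier by blast
  next
    fix t assume t: "t \<in> pos"
    then have "Some (arch_class t) \<in> Arc_bot G leq - {None}"
      unfolding Arc_bot_minus_None using arch_class_in_Arc by blast
    then obtain n where "Arc_bot_le G leq (s n) (Some (arch_class t))"
      using fam unfolding coinitial_dec_family_def by blast
    then show "\<exists>n. \<not> t \<lless> g n"
      using g t Arc_le_arch_class_iff by auto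
  qed (use g in auto)
qed

section \<open>Real ultrametrics and \<open>G\<close>-metrics\<close>

lemma generate_topology_on_refine:
  assumes "\<And>U p. U \<in> \<S> \<Longrightarrow> p \<in> U \<Longrightarrow> \<exists>V\<in>\<T>. p \<in> V \<and> V \<subseteq> U"
    and "generate_topology_on \<S> W"
  shows "generate_topology_on \<T> W"
  using assms(2)
proof induct
  case (Basis U)
  have "U = \<Union>{V\<in>\<T>. V \<subseteq> U}"
    using assms(1)[OF Basis] by blast
  moreover have "generate_topology_on \<T> (\<Union>{V\<in>\<T>. V \<subseteq> U})"
    by (rule generate_topology_on.UN) (auto intro: generate_topology_on.Basis)
  ultimately show ?case by simp
qed (auto intro: generate_topology_on.intros)

lemma topology_generated_by_eqI:
  assumes "\<And>U p. U \<in> \<S> \<Longrightarrow> p \<in> U \<Longrightarrow> \<exists>V\<in>\<T>. p \<in> V \<and> V \<subseteq> U"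
    and "\<And>U p. U \<in> \<T> \<Longrightarrow> p \<in> U \<Longrightarrow> \<exists>V\<in>\<S>. p \<in> V \<and> V \<subseteq> U"
  shows "topology_generated_by \<S> = topology_generated_by \<T>"
  unfolding topology_eq openin_topology_generated_by_iff
  using generate_topology_on_refine[OF assms(1)] generate_topology_on_refine[OF assms(2)] by blast

lemma less_Least_iff:
  fixes P :: "nat \<Rightarrow> bool"
  assumes "P k" and up: "\<And>m n. P m \<Longrightarrow> m \<le> n \<Longrightarrow> P n"
  shows "n < (LEAST j. P j) \<longleftrightarrow> \<not> P n"
  using not_less_Least[of n P] LeastI[of P k, OF assms(1)] up[of "LEAST j. P j" n] by force

lemma is_S_ultrametric_realD:
  assumes "is_S_ultrametric A {0::real..} (\<le>) 0 d" "x \<in> A" "y \<in> A"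
  shows "0 \<le> d x y" "d x y = 0 \<longleftrightarrow> x = y" "d x y = d y x"
  using assms unfolding is_S_ultrametric_def by auto

lemma real_ultrametric_ball_trans:
  assumes "is_S_ultrametric A {0::real..} (\<le>) 0 d" "x \<in> A" "p \<in> A" "z \<in> A"
    and "d x p < r" "d p z < r"
  shows "d x z < r"
  using assms unfolding is_S_ultrametric_def by fastforce

context ordered_comm_group
begin

lemma is_G_metricD:
  assumes "is_G_metric A G leq D" "x \<in> A" "y \<in> A"
  shows "D x y \<in> carrier G" "\<one> \<preceq> D x y" "D x y = \<one> \<longleftrightarrow> x = y" "D x y = D y x"
    and "z \<in> A \<Longrightarrow> D x y \<preceq> D x z \<otimes> D z y"
  using assms unfolding is_G_metric_def by auto

lemma G_metric_ball_nbhd: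
  assumes D: "is_G_metric A G leq D" and "x \<in> A" "p \<in> A" "s \<in> carrier G" "D x p \<lessdot> s"
  obtains c where "c \<in> pos" "\<And>z. z \<in> A \<Longrightarrow> D p z \<lessdot> c \<Longrightarrow> D x z \<lessdot> s"
proof -
  note Dx = is_G_metricD[OF D \<open>x \<in> A\<close>] and Dp = is_G_metricD[OF D \<open>p \<in> A\<close>]
  obtain c where c: "c \<in> pos" "s = D x p \<otimes> c"
    using lt_imp_pos_gap[OF Dx(1)[OF \<open>p \<in> A\<close>] assms(4,5)] by blast
  have "D x z \<lessdot> s" if "z \<in> A" "D p z \<lessdot> c" for z
  proof -
    have "D x p \<otimes> D p z \<lessdot> s"
      using that assms c Dx(1) Dp(1) pos_carrier by (auto intro: mult_left_strict_mono)
    then show ?thesis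
      using Dx(5)[OF \<open>z \<in> A\<close> \<open>p \<in> A\<close>] Dx(1) Dp(1) that(1) assms le_lt_trans by blast
  qed
  with c(1) show ?thesis
    by (rule that)
qed

lemma S_ultrametric_topology_eq_G_metric_topology:
  assumes D: "is_G_metric A G leq D" and d: "is_S_ultrametric A {0::real..} (\<le>) 0 d"
    and D_small: "\<And>r. 0 < r \<Longrightarrow> \<exists>s\<in>pos. \<forall>x\<in>A. \<forall>y\<in>A. D x y \<lessdot> s \<longrightarrow> d x y < r"
    and d_small: "\<And>s. s \<in> pos \<Longrightarrow> \<exists>r>0. \<forall>x\<in>A. \<forall>y\<in>A. d x y < r \<longrightarrow> D x y \<lessdot> s"
  shows "S_ultrametric_topology A {0..} (\<le>) 0 d = G_metric_topology A G leq D"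
  unfolding S_ultrametric_topology_def G_metric_topology_def
proof (rule topology_generated_by_eqI)
  fix U p
  assume "U \<in> {{y \<in> A. d x y \<le> r \<and> d x y \<noteq> r} |x r. x \<in> A \<and> r \<in> {0..} - {0}}" "p \<in> U"
  then obtain x r where x: "x \<in> A" "r \<in> {0..} - {0}" "U = {y \<in> A. d x y \<le> r \<and> d x y \<noteq> r}"
    by blast
  then have r: "0 < r" and U: "U = {y \<in> A. d x y < r}"
    by auto
  then have p: "p \<in> A" "d x p < r"
    using \<open>p \<in> U\<close> by auto
  obtain s where s: "s \<in> pos" "\<forall>x\<in>A. \<forall>y\<in>A. D x y \<lessdot> s \<longrightarrow> d x y < r"
    using D_small[OF r] by blast
  have "{y \<in> A. D p y \<lessdot> s} \<subseteq> U"
    using s(2) p U real_ultrametric_ball_trans[OF d x(1) p(1)] by auto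
  moreover have "p \<in> {y \<in> A. D p y \<lessdot> s}"
    using s(1) p(1) is_G_metricD[OF D p(1) p(1)] by (simp add: pos_iff)
  moreover have "{y \<in> A. D p y \<lessdot> s} \<in> {{y \<in> A. D x y \<lessdot> r} |x r. x \<in> A \<and> r \<in> carrier G \<and> \<one> \<lessdot> r}"
    using p(1) s(1) unfolding pos_iff by blast
  ultimately show "\<exists>V\<in>{{y \<in> A. D x y \<lessdot> r} |x r. x \<in> A \<and> r \<in> carrier G \<and> \<one> \<lessdot> r}. p \<in> V \<and> V \<subseteq> U"
    by blast
next
  fix U p
  assume "U \<in> {{y \<in> A. D x y \<lessdot> s} |x s. x \<in> A \<and> s \<in> carrier G \<and> \<one> \<lessdot> s}" "p \<in> U"
  then obtain x s where x: "x \<in> A" "s \<in> carrier G" "U = {y \<in> A. D x y \<lessdot> s}"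
    and p: "p \<in> A" "D x p \<lessdot> s"
    by auto
  obtain c where c: "c \<in> pos" "\<And>z. z \<in> A \<Longrightarrow> D p z \<lessdot> c \<Longrightarrow> D x z \<lessdot> s"
    using G_metric_ball_nbhd[OF D x(1) p(1) x(2) p(2)] by blast
  obtain r where r: "0 < r" "\<forall>x\<in>A. \<forall>y\<in>A. d x y < r \<longrightarrow> D x y \<lessdot> c"
    using d_small[OF c(1)] by blast
  have "D x z \<lessdot> s" if "z \<in> A" "d p z < r" for z
    using that p(1) r(2) c(2) by blast
  then have "{y \<in> A. d p y \<le> r \<and> d p y \<noteq> r} \<subseteq> U"
    using x(3) by auto
  moreover have "p \<in> {y \<in> A. d p y \<le> r \<and> d p y \<noteq> r}"
    using r(1) p(1) is_S_ultrametric_realD[OF d p(1) p(1)] by simp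
  moreover have "{y \<in> A. d p y \<le> r \<and> d p y \<noteq> r} \<in> {{y \<in> A. d x y \<le> r \<and> d x y \<noteq> r} |x r. x \<in> A \<and> r \<in> {0..} - {0}}"
    using p(1) r(1) by force
  ultimately show "\<exists>V\<in>{{y \<in> A. d x y \<le> r \<and> d x y \<noteq> r} |x r. x \<in> A \<and> r \<in> {0..} - {0}}. p \<in> V \<and> V \<subseteq> U"
    by blast
qed

end

context arch_scale
begin

definition scale_dist :: "'g \<Rightarrow> real" where
  "scale_dist t = (if t = \<one> then 0 else (1/2) ^ (LEAST n. \<not> t \<lless> g n))"

lemma scale_dist_nonneg: "0 \<le> scale_dist t"
  by (simp add: scale_dist_def)

lemma scale_dist_eq_0_iff: "scale_dist t = 0 \<longleftrightarrow> t = \<one>"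
  by (simp add: scale_dist_def)

lemma scale_dist_less_iff:
  assumes t: "t \<in> carrier G" "\<one> \<preceq> t"
  shows "scale_dist t < (1/2) ^ n \<longleftrightarrow> t \<lless> g n"
proof (cases "t = \<one>")
  case True
  then show ?thesis
    using one_arch_less one_lt_scale by (simp add: scale_dist_def)
next
  case False
  then obtain k where "\<not> t \<lless> g k"
    using scale_coinitial t by (auto simp: pos_iff lt_iff)
  then have "n < (LEAST j. \<not> t \<lless> g j) \<longleftrightarrow> t \<lless> g n"
    using arch_less_scale_antimono t by (subst less_Least_iff) blast+
  then show ?thesis
    using False by (simp add: scale_dist_def)
qed

text \<open>The values of \<open>scale_dist\<close> lie in \<open>{0} \<union> {(1/2)^n}\<close>, so they are compared
  by testing against the thresholds \<open>(1/2)^n\<close>.\<close>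
lemma scale_dist_le:
  assumes "0 \<le> v" and "\<And>n. v < (1/2) ^ n \<Longrightarrow> scale_dist t < (1/2) ^ n"
  shows "scale_dist t \<le> v"
proof (rule ccontr)
  assume less: "\<not> scale_dist t \<le> v"
  then have "t \<noteq> \<one>"
    using assms(1) by (auto simp: scale_dist_def)
  then obtain n where "scale_dist t = (1/2) ^ n"
    by (simp add: scale_dist_def)
  then show False
    using less assms(2)[of n] by simp
qed

lemma is_S_ultrametric_scale_dist:
  assumes D: "is_G_metric A G leq D"
  shows "is_S_ultrametric A {0..} (\<le>) 0 (\<lambda>x y. scale_dist (D x y))"
  unfolding is_S_ultrametric_def
proof (intro conjI ballI)
  fix x y z assume xyz: "x \<in> A" "y \<in> A" "z \<in> A"
  note Dxz = is_G_metricD[OF D xyz(1,3)] and Dzy = is_G_metricD[OF D xyz(3,2)]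
  have "scale_dist (D x y) \<le> max (scale_dist (D x z)) (scale_dist (D z y))"
  proof (rule scale_dist_le)
    fix n assume "max (scale_dist (D x z)) (scale_dist (D z y)) < (1/2) ^ n"
    then have "D x z \<lless> g n" "D z y \<lless> g n"
      using scale_dist_less_iff Dxz Dzy by auto
    then have "D x z \<otimes> D z y \<lless> g n"
      using arch_less_mult Dxz Dzy by simp
    then have "D x y \<lless> g n"
      using le_arch_less_trans[of "D x y" "D x z \<otimes> D z y" "g n"] is_G_metricD(1)[OF D xyz(1,2)]
        is_G_metricD(5)[OF D xyz] Dxz(1) Dzy(1) by simp
    then show "scale_dist (D x y) < (1/2) ^ n"
      using scale_dist_less_iff is_G_metricD(1,2)[OF D xyz(1,2)] by blast
  qed (simp add: scale_dist_nonneg max.coboundedI1)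
  then show "scale_dist (D x y) \<le> scale_dist (D x z) \<or> scale_dist (D x y) \<le> scale_dist (D z y)"
    by linarith
qed (use is_G_metricD[OF D] in \<open>auto simp: scale_dist_nonneg scale_dist_eq_0_iff\<close>)

lemma S_ultrametric_topology_scale_dist:
  assumes D: "is_G_metric A G leq D"
  shows "S_ultrametric_topology A {0..} (\<le>) 0 (\<lambda>x y. scale_dist (D x y)) = G_metric_topology A G leq D"
proof (rule S_ultrametric_topology_eq_G_metric_topology[OF D is_S_ultrametric_scale_dist[OF D]])
  fix r :: real assume "0 < r"
  then obtain n where n: "(1/2) ^ n < r"
    using real_arch_pow_inv[of r "1/2"] by auto
  have "scale_dist (D x y) < r" if "x \<in> A" "y \<in> A" "D x y \<lessdot> g (Suc n)" for x y
  proof -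
    have "D x y \<lless> g n"
      using that is_G_metricD[OF D] le_arch_less_trans[of "D x y" "g (Suc n)" "g n"]
        scale_Suc_arch_less lt_iff by auto
    then have "scale_dist (D x y) < (1/2) ^ n"
      using that is_G_metricD[OF D] scale_dist_less_iff by blast
    with n show ?thesis
      by simp
  qed
  then show "\<exists>s\<in>pos. \<forall>x\<in>A. \<forall>y\<in>A. D x y \<lessdot> s \<longrightarrow> scale_dist (D x y) < r"
    using scale_pos by blast
next
  fix s assume s: "s \<in> pos"
  then obtain n where n: "\<not> s \<lless> g n"
    using scale_coinitial by blast
  have "D x y \<lessdot> s" if "x \<in> A" "y \<in> A" "scale_dist (D x y) < (1/2) ^ n" for x y
    using that n s is_G_metricD[OF D] scale_dist_less_iff pos_carrier
      arch_less_not_arch_less_trans[of "D x y" "g n" s] arch_less_imp_lt by auto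
  then show "\<exists>r>0. \<forall>x\<in>A. \<forall>y\<in>A. scale_dist (D x y) < r \<longrightarrow> D x y \<lessdot> s"
    by (intro exI[of _ "(1/2) ^ n"]) auto
qed

definition scale_elem :: "real \<Rightarrow> 'g" where
  "scale_elem v = (if v = 0 then \<one> else g (LEAST n. (1/2) ^ n \<le> v))"

lemma scale_elem_carrier: "scale_elem v \<in> carrier G"
  by (simp add: scale_elem_def)

lemma one_le_scale_elem: "\<one> \<preceq> scale_elem v"
  using one_lt_scale ord_refl by (simp add: scale_elem_def lt_iff)

lemma scale_elem_eq_one_iff: "scale_elem v = \<one> \<longleftrightarrow> v = 0"
  by (simp add: scale_elem_def) (metis one_lt_scale lt_iff)

lemma scale_elem_lt_scale_iff:
  assumes "0 \<le> v"
  shows "scale_elem v \<lessdot> g m \<longleftrightarrow> v < (1/2) ^ m"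
proof (cases "v = 0")
  case True
  then show ?thesis
    using one_lt_scale by (simp add: scale_elem_def)
next
  case False
  then obtain k where "(1/2::real) ^ k \<le> v"
    using assms real_arch_pow_inv[of v "1/2"] by (auto intro: less_imp_le)
  moreover have "(1/2::real) ^ j \<le> v" if "(1/2::real) ^ i \<le> v" "i \<le> j" for i j
    using that power_decreasing[of i j "1/2::real"] by linarith
  ultimately have "m < (LEAST n. (1/2::real) ^ n \<le> v) \<longleftrightarrow> \<not> (1/2) ^ m \<le> v"
    by (rule less_Least_iff)
  then show ?thesis
    using False scale_lt_iff by (auto simp: scale_elem_def not_le)
qed

lemma scale_elem_mono:
  assumes "0 \<le> u" "u \<le> v"
  shows "scale_elem u \<preceq> scale_elem v"
proof (cases "u = 0")
  case True
  then show ?thesis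
    using one_le_scale_elem by (simp add: scale_elem_def)
next
  case False
  then obtain k where "(1/2::real) ^ k \<le> u"
    using assms real_arch_pow_inv[of u "1/2"] by (auto intro: less_imp_le)
  then have "(1/2::real) ^ (LEAST n. (1/2::real) ^ n \<le> u) \<le> v"
    using LeastI[of "\<lambda>n. (1/2::real) ^ n \<le> u"] assms(2) by (meson order_trans)
  then have "(LEAST n. (1/2::real) ^ n \<le> v) \<le> (LEAST n. (1/2::real) ^ n \<le> u)"
    by (rule Least_le)
  then show ?thesis
    using False assms scale_antimono by (simp add: scale_elem_def)
qed

lemma is_G_metric_scale_elem:
  assumes d: "is_S_ultrametric A {0::real..} (\<le>) 0 d"
  shows "is_G_metric A G leq (\<lambda>x y. scale_elem (d x y))"
  unfolding is_G_metric_def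
proof (intro conjI ballI)
  fix x y z assume xyz: "x \<in> A" "y \<in> A" "z \<in> A"
  let ?E = "\<lambda>x y. scale_elem (d x y)"
  have le_sum: "?E x z \<preceq> ?E x z \<otimes> ?E z y" "?E z y \<preceq> ?E x z \<otimes> ?E z y"
    using le_mult_nonneg mult_right_mono[of \<one> "?E x z" "?E z y"] one_le_scale_elem scale_elem_carrier
    by auto
  have "d x y \<le> d x z \<or> d x y \<le> d z y"
    using d xyz unfolding is_S_ultrametric_def by blast
  then have "?E x y \<preceq> ?E x z \<or> ?E x y \<preceq> ?E z y"
    using scale_elem_mono is_S_ultrametric_realD(1)[OF d] xyz by blast
  then show "?E x y \<preceq> ?E x z \<otimes> ?E z y"
    using le_sum ord_trans[of "?E x y" _ "?E x z \<otimes> ?E z y"] scale_elem_carrier by auto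
qed (use is_S_ultrametric_realD[OF d] in \<open>auto simp: scale_elem_carrier one_le_scale_elem scale_elem_eq_one_iff\<close>)

lemma S_ultrametric_topology_scale_elem:
  assumes d: "is_S_ultrametric A {0::real..} (\<le>) 0 d"
  shows "S_ultrametric_topology A {0..} (\<le>) 0 d = G_metric_topology A G leq (\<lambda>x y. scale_elem (d x y))"
proof (rule S_ultrametric_topology_eq_G_metric_topology[OF is_G_metric_scale_elem[OF d] d])
  fix r :: real assume "0 < r"
  then obtain n where n: "(1/2) ^ n < r"
    using real_arch_pow_inv[of r "1/2"] by auto
  have "d x y < r" if "x \<in> A" "y \<in> A" "scale_elem (d x y) \<lessdot> g n" for x y
    using that n scale_elem_lt_scale_iff is_S_ultrametric_realD(1)[OF d] by fastforce
  then show "\<exists>s\<in>pos. \<forall>x\<in>A. \<forall>y\<in>A. scale_elem (d x y) \<lessdot> s \<longrightarrow> d x y < r"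
    using scale_pos by blast
next
  fix s assume "s \<in> pos"
  then obtain n where "g n \<lessdot> s"
    by (rule scale_below)
  then have "scale_elem (d x y) \<lessdot> s" if "x \<in> A" "y \<in> A" "d x y < (1/2) ^ n" for x y
    using that \<open>s \<in> pos\<close> scale_elem_lt_scale_iff is_S_ultrametric_realD[OF d]
      lt_trans[of "scale_elem (d x y)" "g n" s] scale_elem_carrier pos_carrier by simp
  then show "\<exists>r>0. \<forall>x\<in>A. \<forall>y\<in>A. d x y < r \<longrightarrow> scale_elem (d x y) \<lessdot> s"
    by (intro exI[of _ "(1/2) ^ n"]) auto
qed

lemma Met_nonempty_iff_Ult_nonempty: "Met X G leq \<noteq> {} \<longleftrightarrow> Ult X {0::real..} (\<le>) 0 \<noteq> {}"
proof
  assume "Met X G leq \<noteq> {}"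
  then obtain D where D: "is_G_metric (topspace X) G leq D" "G_metric_topology (topspace X) G leq D = X"
    unfolding Met_def by blast
  then have "(\<lambda>x y. scale_dist (D x y)) \<in> Ult X {0::real..} (\<le>) 0"
    unfolding Ult_def using is_S_ultrametric_scale_dist[OF D(1)] S_ultrametric_topology_scale_dist[OF D(1)]
    by simp
  then show "Ult X {0::real..} (\<le>) 0 \<noteq> {}" by blast
next
  assume "Ult X {0::real..} (\<le>) 0 \<noteq> {}"
  then obtain d where d: "is_S_ultrametric (topspace X) {0::real..} (\<le>) 0 d"
    "S_ultrametric_topology (topspace X) {0::real..} (\<le>) 0 d = X"
    unfolding Ult_def by blast
  then have "(\<lambda>x y. scale_elem (d x y)) \<in> Met X G leq"
    unfolding Met_def using is_G_metric_scale_elem[OF d(1)] S_ultrametric_topology_scale_elem[OF d(1)]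
    by simp
  then show "Met X G leq \<noteq> {}" by blast
qed

end

section \<open>A group with a scale on every infinite type\<close>

text \<open>The positive cone of the order on polynomials in which the indeterminate is infinitely small.\<close>
definition lex_pos :: "'a::{zero,ord} poly \<Rightarrow> bool" where
  "lex_pos p \<longleftrightarrow> (\<exists>n. 0 < coeff p n \<and> (\<forall>i<n. coeff p i = 0))"

lemma lex_pos_add:
  fixes p q :: "'a::linordered_ab_group_add poly"
  assumes "lex_pos p" "lex_pos q"
  shows "lex_pos (p + q)"
proof -
  obtain n where n: "0 < coeff p n" "\<forall>i<n. coeff p i = 0"
    using assms(1) unfolding lex_pos_def by blast
  obtain m where m: "0 < coeff q m" "\<forall>i<m. coeff q i = 0"
    using assms(2) unfolding lex_pos_def by blast
  have "0 < coeff (p + q) (min n m) \<and> (\<forall>i<min n m. coeff (p + q) i = 0)"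
    using n m by (cases n m rule: linorder_cases) (auto simp: add_pos_pos)
  then show ?thesis
    unfolding lex_pos_def by blast
qed

lemma lex_pos_uminus:
  fixes p :: "'a::linordered_ab_group_add poly"
  assumes "lex_pos p"
  shows "\<not> lex_pos (- p)"
proof
  assume "lex_pos (- p)"
  then obtain m where "0 < coeff (- p) m" "\<forall>i<m. coeff (- p) i = 0"
    unfolding lex_pos_def by blast
  moreover obtain n where "0 < coeff p n" "\<forall>i<n. coeff p i = 0"
    using assms unfolding lex_pos_def by blast
  ultimately show False
    by (cases n m rule: linorder_cases) auto
qed

lemma lex_pos_or_uminus:
  fixes p :: "'a::linordered_ab_group_add poly"
  assumes "p \<noteq> 0"
  shows "lex_pos p \<or> lex_pos (- p)"
proof -
  have "\<exists>n. coeff p n \<noteq> 0"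
    using assms by (metis coeff_0 poly_eqI)
  then obtain n where "coeff p n \<noteq> 0" "\<forall>i<n. coeff p i = 0"
    using exists_least_iff[of "\<lambda>n. coeff p n \<noteq> 0"] by blast
  then show ?thesis
    unfolding lex_pos_def by (cases "0 < coeff p n") (auto intro!: exI[of _ n])
qed

text \<open>The theorem fixes the carrier type, so the ordered group is transported to it along an
  injection \<open>e\<close>; the order is given by a positive cone \<open>P\<close>.\<close>
definition image_group :: "('b::ab_group_add \<Rightarrow> 'g) \<Rightarrow> 'g monoid" where
  "image_group e =
     \<lparr>carrier = range e, mult = (\<lambda>a b. e (inv_into UNIV e a + inv_into UNIV e b)), one = e 0\<rparr>"

definition image_le :: "('b::ab_group_add \<Rightarrow> bool) \<Rightarrow> ('b \<Rightarrow> 'g) \<Rightarrow> 'g \<Rightarrow> 'g \<Rightarrow> bool" where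
  "image_le P e a b \<longleftrightarrow> a = b \<or> P (inv_into UNIV e b - inv_into UNIV e a)"

lemma image_group_simps:
  assumes "inj e"
  shows "carrier (image_group e) = range e" "e p \<otimes>\<^bsub>image_group e\<^esub> e q = e (p + q)"
    "\<one>\<^bsub>image_group e\<^esub> = e 0" "image_le P e (e p) (e q) \<longleftrightarrow> p = q \<or> P (q - p)"
  using assms unfolding image_group_def image_le_def by (auto simp: inj_eq)

lemma ordered_comm_group_image_group:
  assumes e: "inj e"
    and add: "\<And>p q. P p \<Longrightarrow> P q \<Longrightarrow> P (p + q)"
    and asym: "\<And>p. P p \<Longrightarrow> \<not> P (- p)"
    and total: "\<And>p. p \<noteq> 0 \<Longrightarrow> P p \<or> P (- p)"
  shows "ordered_comm_group (image_group e) (image_le P e)"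
proof -
  note simps = image_group_simps[OF e]
  have "comm_group (image_group e)"
  proof (rule comm_groupI)
    fix x assume "x \<in> carrier (image_group e)"
    then obtain p where "x = e p"
      using simps by auto
    then have "e (- p) \<in> carrier (image_group e) \<and> e (- p) \<otimes>\<^bsub>image_group e\<^esub> x = \<one>\<^bsub>image_group e\<^esub>"
      using simps by simp
    then show "\<exists>y\<in>carrier (image_group e). y \<otimes>\<^bsub>image_group e\<^esub> x = \<one>\<^bsub>image_group e\<^esub>"
      by blast
  qed (auto simp: simps ac_simps)
  then show ?thesis
  proof (rule ordered_comm_group.intro, unfold_locales)
    fix x y assume "x \<in> carrier (image_group e)" "y \<in> carrier (image_group e)"
      "image_le P e x y" "image_le P e y x"
    then show "x = y"
      using simps asym[of "_ - _"] by (auto simp: minus_diff_eq)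
  next
    fix x y z assume "x \<in> carrier (image_group e)" "y \<in> carrier (image_group e)"
      "z \<in> carrier (image_group e)" "image_le P e x y" "image_le P e y z"
    then obtain p q r where "x = e p" "y = e q" "z = e r" "p = q \<or> P (q - p)" "q = r \<or> P (r - q)"
      using simps by auto
    then show "image_le P e x z"
      using simps add[of "r - q" "q - p"] by auto
  next
    fix x y assume "x \<in> carrier (image_group e)" "y \<in> carrier (image_group e)"
    then obtain p q where "x = e p" "y = e q"
      using simps by auto
    then show "image_le P e x y \<or> image_le P e y x"
      using simps total[of "q - p"] by (auto simp: minus_diff_eq)
  qed (auto simp: simps)
qed

lemma image_group_pow:
  fixes e :: "'b::ring_1 \<Rightarrow> 'g"
  assumes "inj e"
  shows "e p [^]\<^bsub>image_group e\<^esub> (n::nat) = e (of_nat n * p)"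
  by (induction n) (simp_all add: image_group_simps[OF assms] algebra_simps)

lemma image_group_lt_iff:
  assumes "inj e" and asym: "\<And>p. P p \<Longrightarrow> \<not> P (- p)"
  shows "grp_lt (image_group e) (image_le P e) (e p) (e q) \<longleftrightarrow> P (q - p)"
  using asym[of 0] image_group_simps[OF assms(1)] assms(1) by (auto simp: grp_lt_def inj_eq)

lemma arch_scale_lex_monomials:
  fixes e :: "int poly \<Rightarrow> 'g"
  assumes e: "inj e"
  shows "arch_scale (image_group e) (image_le lex_pos e) (\<lambda>n. e (monom 1 n))"
proof -
  let ?G = "image_group e" and ?le = "image_le lex_pos e"
  interpret ordered_comm_group ?G ?le
    using ordered_comm_group_image_group[OF e lex_pos_add lex_pos_uminus lex_pos_or_uminus] .
  note simps = image_group_simps[OF e] and lt = image_group_lt_iff[where P = lex_pos, OF e lex_pos_uminus]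
  show ?thesis
  proof unfold_locales
    fix n
    have "lex_pos (monom (1::int) n - 0)"
      unfolding lex_pos_def by (intro exI[of _ n]) simp
    then show "e (monom 1 n) \<in> grp_pos ?G ?le"
      by (simp add: pos_iff simps lt)
    show "arch_less ?G ?le (e (monom 1 (Suc n))) (e (monom 1 n))"
      unfolding arch_less_def
    proof (intro allI impI)
      fix k :: nat
      have "lex_pos (monom 1 n - of_nat k * monom (1::int) (Suc n))"
        unfolding lex_pos_def by (intro exI[of _ n]) (simp add: of_nat_poly coeff_monom_mult)
      then show "grp_lt ?G ?le (e (monom 1 (Suc n)) [^]\<^bsub>?G\<^esub> k) (e (monom 1 n))"
        by (simp add: image_group_pow[OF e] lt)
    qed
  next
    fix t assume t: "t \<in> grp_pos ?G ?le"
    then obtain p where p: "t = e p" "lex_pos p"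
      using simps lt[of 0] by (auto simp: pos_iff)
    then obtain m where "0 < coeff p m" "\<forall>i<m. coeff p i = 0"
      unfolding lex_pos_def by blast
    then have "lex_pos (p - monom 1 (Suc m))"
      unfolding lex_pos_def by (intro exI[of _ m]) simp
    then have "grp_lt ?G ?le (e (monom 1 (Suc m))) t"
      using p(1) by (simp add: lt)
    moreover have "t \<in> carrier ?G" "e (monom 1 (Suc m)) \<in> carrier ?G"
      using t pos_carrier simps by auto
    ultimately have "\<not> arch_less ?G ?le t (e (monom 1 (Suc m)))"
      using le_not_arch_less lt_iff by blast
    then show "\<exists>n. \<not> arch_less ?G ?le t (e (monom 1 n))" ..
  qed
qed

lemma inj_int_poly_into_infinite:
  assumes "infinite (UNIV :: 'g set)"
  obtains e :: "int poly \<Rightarrow> 'g" where "inj e"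
proof -
  obtain f :: "nat \<Rightarrow> 'g" where "inj f"
    using infinite_countable_subset[OF assms] by blast
  moreover have "inj (to_nat \<circ> coeffs :: int poly \<Rightarrow> nat)"
    by (simp add: inj_def coeffs_eq_iff)
  ultimately show ?thesis
    using that inj_compose by blast
qed

lemma exists_arch_scale:
  assumes "infinite (UNIV :: 'g set)"
  obtains G :: "'g monoid" and leq g where "arch_scale G leq g"
proof -
  obtain e :: "int poly \<Rightarrow> 'g" where "inj e"
    using inj_int_poly_into_infinite[OF assms] .
  then show ?thesis
    using that arch_scale_lex_monomials by blast
qed

theorem proposition2p46:
  fixes X :: "'a topology"
  assumes "infinite (UNIV :: 'g set)"
  shows "Ult X {0::real..} (\<le>) 0 \<noteq> {} \<longleftrightarrow>
         (\<exists>(G :: 'g monoid) leq.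
            lin_ord_ab_group G leq \<and>
            chi_is_omega0 (Arc_bot G leq) (Arc_bot_le G leq) None \<and>
            Met X G leq \<noteq> {})"
proof
  assume ult: "Ult X {0::real..} (\<le>) 0 \<noteq> {}"
  obtain G :: "'g monoid" and leq g where scale: "arch_scale G leq g"
    using exists_arch_scale[OF assms] .
  have "lin_ord_ab_group G leq"
    using arch_scale.axioms(1)[OF scale] by (simp add: lin_ord_ab_group_iff)
  moreover have "chi_is_omega0 (Arc_bot G leq) (Arc_bot_le G leq) None"
    by (rule arch_scale.chi_is_omega0_Arc_bot[OF scale])
  moreover have "Met X G leq \<noteq> {}"
    using arch_scale.Met_nonempty_iff_Ult_nonempty[OF scale] ult by blast
  ultimately show "\<exists>(G :: 'g monoid) leq. lin_ord_ab_group G leq \<and>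
      chi_is_omega0 (Arc_bot G leq) (Arc_bot_le G leq) None \<and> Met X G leq \<noteq> {}"
    by blast
next
  assume "\<exists>(G :: 'g monoid) leq. lin_ord_ab_group G leq \<and>
      chi_is_omega0 (Arc_bot G leq) (Arc_bot_le G leq) None \<and> Met X G leq \<noteq> {}"
  then obtain G :: "'g monoid" and leq where G: "ordered_comm_group G leq"
    and chi: "chi_is_omega0 (Arc_bot G leq) (Arc_bot_le G leq) None" and met: "Met X G leq \<noteq> {}"
    by (auto simp: lin_ord_ab_group_iff)
  obtain g where "arch_scale G leq g"
    using ordered_comm_group.chi_is_omega0_imp_arch_scale[OF G chi] .
  then show "Ult X {0::real..} (\<le>) 0 \<noteq> {}"
    using arch_scale.Met_nonempty_iff_Ult_nonempty met by blast
qed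

end
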